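(* Let $N\ge1$ and let $a_0,\dots,a_N$, $b_0,\dots,b_N$, $c_0,\dots,c_N$ be real numbers such that the $a_i$ are pairwise distinct, the $b_j$ are pairwise distinct, and the $c_k$ are pairwise distinct. Then the $\binom{N+3}{3}$ operators $$(a_i\mathbb{I}+b_j\sigma_X+c_k\sigma_Y+\sigma_Z)^{\otimes N},\qquad i,j,k\in\mathbb{Z}_{\ge0},\ i+j+k\le N,$$ are linearly independent over $\mathbb{R}$ and form a basis of the real vector space $\mathrm{Sym}_N(G_1)$ of permutation-invariant Hermitian operators on $N$ qubits.
   Context: $\mathbb{I},\sigma_X,\sigma_Y,\sigma_Z$ denote the $2\times2$ identity and Pauli matrices. For $\pi\in S_N$, $P(\pi)$ is the unitary on $(\mathbb{C}^2)^{\otimes N}$ permuting the tensor factors according to $\pi$. $\mathrm{Sym}_N(G_1)$ is the real vector space of Hermitian operators $M$ on $(\mathbb{C}^2)^{\otimes N}$ with $P(\pi)MP(\pi)^\dagger=M$ for all $\pi\in S_N$; it has real dimension $\binom{N+3}{3}$. *)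

theory Defs
  imports "HOL-Analysis.Analysis" "HOL-Combinatorics.Permutations"
begin

text \<open>Operators on (C^2)^(tensor N): matrices indexed by computational basis states,
  i.e. bit lists of length N (False = |0>, True = |1>).\<close>

type_synonym qop = "bool list \<Rightarrow> bool list \<Rightarrow> complex"
type_synonym qmat2 = "bool \<Rightarrow> bool \<Rightarrow> complex"

definition idM :: qmat2 where "idM x y = (if x = y then 1 else 0)"
definition sigX :: qmat2 where "sigX x y = (if x \<noteq> y then 1 else 0)"
definition sigY :: qmat2 where
  "sigY x y = (if x = False \<and> y = True then - \<i> else if x = True \<and> y = False then \<i> else 0)"
definition sigZ :: qmat2 where
  "sigZ x y = (if x = y then (if x then -1 else 1) else 0)"

definition pauli_comb :: "real \<Rightarrow> real \<Rightarrow> real \<Rightarrow> qmat2" where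
  "pauli_comb a b c x y = of_real a * idM x y + of_real b * sigX x y + of_real c * sigY x y + sigZ x y"

definition states :: "nat \<Rightarrow> bool list set" where
  "states N = {xs. length xs = N}"

definition qubit_ops :: "nat \<Rightarrow> qop set" where
  "qubit_ops N = {M. \<forall>xs ys. (xs \<notin> states N \<or> ys \<notin> states N) \<longrightarrow> M xs ys = 0}"

definition tensor_pow :: "nat \<Rightarrow> qmat2 \<Rightarrow> qop" where
  "tensor_pow N A xs ys =
     (if xs \<in> states N \<and> ys \<in> states N then (\<Prod>t<N. A (xs ! t) (ys ! t)) else 0)"

definition op_mult :: "nat \<Rightarrow> qop \<Rightarrow> qop \<Rightarrow> qop" where
  "op_mult N M1 M2 xs ys = (\<Sum>zs\<in>states N. M1 xs zs * M2 zs ys)"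

definition adjoint_op :: "qop \<Rightarrow> qop" where
  "adjoint_op M xs ys = cnj (M ys xs)"

text \<open>P(pi): permutes the tensor factors, |x_0..x_{N-1}> maps to the state whose factor
  pi(t) is x_t.\<close>
definition permute_state :: "nat \<Rightarrow> (nat \<Rightarrow> nat) \<Rightarrow> bool list \<Rightarrow> bool list" where
  "permute_state N \<pi> xs = map (\<lambda>t. xs ! (inv \<pi> t)) [0..<N]"

definition perm_op :: "nat \<Rightarrow> (nat \<Rightarrow> nat) \<Rightarrow> qop" where
  "perm_op N \<pi> xs ys = (if xs \<in> states N \<and> ys \<in> states N \<and> xs = permute_state N \<pi> ys then 1 else 0)"

definition hermitian_op :: "qop \<Rightarrow> bool" where
  "hermitian_op M \<longleftrightarrow> adjoint_op M = M"

definition Sym_ops :: "nat \<Rightarrow> qop set" where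
  "Sym_ops N = {M \<in> qubit_ops N. hermitian_op M \<and>
      (\<forall>\<pi>. \<pi> permutes {..<N} \<longrightarrow>
         op_mult N (op_mult N (perm_op N \<pi>) M) (adjoint_op (perm_op N \<pi>)) = M)}"

definition real_comb :: "'i set \<Rightarrow> ('i \<Rightarrow> real) \<Rightarrow> ('i \<Rightarrow> qop) \<Rightarrow> qop" where
  "real_comb I r F xs ys = (\<Sum>t\<in>I. complex_of_real (r t) * F t xs ys)"

end

theory Submission
  imports Defs "HOL-Library.Function_Algebras"
begin

text \<open>
  Independence is detected by product functionals \<open>M \<mapsto> \<Sum>x y. (\<Prod>t. w t (x!t) (y!t)) * M x y\<close>,
  which factorise on tensor powers. For one qubit there are weights pairing \<open>a I + b X + c Y + Z\<close>
  with \<open>a - \<alpha>\<close>, \<open>b - \<beta>\<close>, \<open>c - \<gamma>\<close> and \<open>1\<close>. Taking \<open>\<alpha> = a 0, \<dots>, a (i0 - 1)\<close> on the first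
  \<open>i0\<close> factors, then \<open>\<beta> = b 0, \<dots>, b (j0 - 1)\<close>, then \<open>\<gamma> = c 0, \<dots>, c (k0 - 1)\<close>, and the last
  weight on the remaining factors, the operator with index \<open>(i, j, k)\<close> is sent to
  \<open>\<Prod>t<i0. (a i - a t) \<cdot> \<Prod>t<j0. (b j - b t) \<cdot> \<Prod>t<k0. (c k - c t)\<close>. This vanishes unless
  \<open>i0 \<le> i\<close>, \<open>j0 \<le> j\<close>, \<open>k0 \<le> k\<close>, and is non-zero for \<open>(i, j, k) = (i0, j0, k0)\<close> by distinctness,
  so the pairing matrix is triangular with respect to \<open>i + j + k\<close>.

  An operator commuting with all qubit permutations has entries \<open>M x y\<close> that depend only on the
  numbers of positions where \<open>(x!t, y!t)\<close> is \<open>(0, 0)\<close>, \<open>(0, 1)\<close> and \<open>(1, 0)\<close>, a triple with sum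
  at most \<open>N\<close>. Together with hermiticity this gives a spanning family of \<open>Sym_ops N\<close> indexed by the
  same \<open>(N + 3) choose 3\<close> triples, and an independent family of that size must span.
\<close>

definition triples_le :: "nat \<Rightarrow> (nat \<times> nat \<times> nat) set" where
  "triples_le N = {(i, j, k). i + j + k \<le> N}"

definition pauli_tensor ::
    "nat \<Rightarrow> (nat \<Rightarrow> real) \<Rightarrow> (nat \<Rightarrow> real) \<Rightarrow> (nat \<Rightarrow> real) \<Rightarrow> nat \<times> nat \<times> nat \<Rightarrow> qop" where
  "pauli_tensor N a b c = (\<lambda>(i, j, k). tensor_pow N (pauli_comb (a i) (b j) (c k)))"

lemma finite_triples_le: "finite (triples_le N)"
  unfolding triples_le_def by (rule finite_subset[of _ "{..N} \<times> {..N} \<times> {..N}"]) auto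

lemma card_pairs_sum_le: "card {(i::nat, j::nat). i + j \<le> m} = (m + 2) choose 2"
proof (induction m)
  case 0
  have "{(i::nat, j::nat). i + j \<le> 0} = {(0, 0)}" by auto
  then show ?case by (simp add: numeral_2_eq_2)
next
  case (Suc m)
  have split: "{(i::nat, j::nat). i + j \<le> Suc m}
      = {(i, j). i + j \<le> m} \<union> (\<lambda>i. (i, Suc m - i)) ` {..Suc m}"
    by (auto simp: image_iff)
  have "finite {(i::nat, j::nat). i + j \<le> m}"
    by (rule finite_subset[of _ "{..m} \<times> {..m}"]) auto
  moreover have "card ((\<lambda>i. (i, Suc m - i)) ` {..Suc m}) = Suc (Suc m)"
    by (subst card_image) (auto simp: inj_on_def)
  ultimately have "card {(i::nat, j::nat). i + j \<le> Suc m} = card {(i::nat, j::nat). i + j \<le> m} + Suc (Suc m)"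
    unfolding split by (subst card_Un_disjoint) auto
  then show ?case using Suc by (simp add: numeral_2_eq_2)
qed

lemma card_triples_sum_eq: "card {(i::nat, j::nat, k::nat). i + j + k = m} = (m + 2) choose 2"
proof -
  have "{(i::nat, j::nat, k::nat). i + j + k = m} = (\<lambda>(i, j). (i, j, m - i - j)) ` {(i, j). i + j \<le> m}"
    by (auto simp: image_iff)
  moreover have "inj_on (\<lambda>(i::nat, j::nat). (i, j, m - i - j)) {(i, j). i + j \<le> m}"
    by (auto simp: inj_on_def)
  ultimately show ?thesis by (simp add: card_image card_pairs_sum_le)
qed

lemma card_triples_le: "card (triples_le N) = (N + 3) choose 3"
proof (induction N)
  case 0
  have "triples_le 0 = {(0, 0, 0)}" by (auto simp: triples_le_def)
  then show ?case by (simp add: numeral_3_eq_3)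
next
  case (Suc m)
  have split: "triples_le (Suc m) = triples_le m \<union> {(i, j, k). i + j + k = Suc m}"
    by (auto simp: triples_le_def)
  have "finite {(i::nat, j::nat, k::nat). i + j + k = Suc m}"
    by (rule finite_subset[OF _ finite_triples_le[of "Suc m"]]) (auto simp: triples_le_def)
  then have "card (triples_le (Suc m)) = ((m + 3) choose 3) + ((Suc m + 2) choose 2)"
    unfolding split using finite_triples_le Suc card_triples_sum_eq
    by (subst card_Un_disjoint) (auto simp: triples_le_def)
  then show ?case by (simp add: numeral_3_eq_3 numeral_2_eq_2)
qed

definition rscale :: "real \<Rightarrow> qop \<Rightarrow> qop" where
  "rscale r M = (\<lambda>xs ys. complex_of_real r * M xs ys)"

interpretation qop: vector_space rscale
  by unfold_locales (auto simp: rscale_def fun_eq_iff algebra_simps)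

lemma sum_qop_apply: "(sum f I) xs ys = (\<Sum>i\<in>I. f i xs ys)"
  for f :: "'i \<Rightarrow> qop"
  by (induction I rule: infinite_finite_induct) auto

lemma real_comb_eq_sum: "real_comb I r F = (\<Sum>t\<in>I. rscale (r t) (F t))"
  by (intro ext) (simp add: real_comb_def sum_qop_apply rscale_def)

lemma (in vector_space) inj_on_independent_if_coeffs_zero:
  assumes fin: "finite I"
    and coeffs: "\<And>r. (\<Sum>t\<in>I. scale (r t) (f t)) = 0 \<Longrightarrow> \<forall>t\<in>I. r t = 0"
  shows "inj_on f I" and "independent (f ` I)"
proof -
  show inj: "inj_on f I"
  proof (rule inj_onI, rule ccontr)
    fix s t assume st: "s \<in> I" "t \<in> I" "f s = f t" "s \<noteq> t"
    let ?r = "\<lambda>u. if u = s then 1::'a else if u = t then -1 else 0"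
    have "(\<Sum>u\<in>I. scale (?r u) (f u)) = (\<Sum>u\<in>I. (if u = s then f s else 0) - (if u = t then f t else 0))"
      using st by (intro sum.cong) auto
    also have "\<dots> = 0"
      using st fin by (simp add: sum_subtractf)
    finally have "\<forall>u\<in>I. ?r u = 0"
      by (rule coeffs)
    then show False
      using st by auto
  qed
  show "independent (f ` I)"
  proof (rule independent_if_scalars_zero)
    show "finite (f ` I)" using fin by simp
    fix u v assume "(\<Sum>x\<in>f ` I. scale (u x) x) = 0" "v \<in> f ` I"
    then show "u v = 0" using coeffs[of "u \<circ> f"] by (auto simp: sum.reindex[OF inj])
  qed
qed

lemma (in vector_space) exists_coeffs_if_coeffs_zero_card_le:
  assumes fin: "finite I" "finite T"
    and coeffs: "\<And>r. (\<Sum>t\<in>I. scale (r t) (f t)) = 0 \<Longrightarrow> \<forall>t\<in>I. r t = 0"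
    and sub: "f ` I \<subseteq> span T"
    and card: "card T \<le> card I"
    and x: "x \<in> span T"
  shows "\<exists>r. x = (\<Sum>t\<in>I. scale (r t) (f t))"
proof -
  note inj = inj_on_independent_if_coeffs_zero(1)[of I f, OF fin(1) coeffs]
  note indep = inj_on_independent_if_coeffs_zero(2)[of I f, OF fin(1) coeffs]
  have "x \<in> span (f ` I)"
  proof (rule ccontr)
    assume x': "x \<notin> span (f ` I)"
    have notin: "x \<notin> f ` I"
      using x' span_base by blast
    have "independent (insert x (f ` I))"
      using independent_insertI[OF x' indep] .
    then have "card (insert x (f ` I)) \<le> card T"
      using independent_span_bound[OF fin(2)] sub x by blast
    moreover have "card (insert x (f ` I)) = Suc (card I)"
      using notin fin card_image[OF inj] by simp
    ultimately show False using card by simp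
  qed
  then obtain u where "x = (\<Sum>v\<in>f ` I. scale (u v) v)"
    using span_finite[of "f ` I"] fin by auto
  then show ?thesis
    by (auto simp: sum.reindex[OF inj])
qed

lemma triangular_solution_eq_0:
  fixes A :: "'i \<Rightarrow> 'i \<Rightarrow> 'a::field" and \<mu> :: "'i \<Rightarrow> nat"
  assumes "finite I"
    and upper: "\<And>s t. s \<in> I \<Longrightarrow> t \<in> I \<Longrightarrow> A s t \<noteq> 0 \<Longrightarrow> s = t \<or> \<mu> s < \<mu> t"
    and diag: "\<And>s. s \<in> I \<Longrightarrow> A s s \<noteq> 0"
    and solution: "\<And>s. s \<in> I \<Longrightarrow> (\<Sum>t\<in>I. A s t * x t) = 0"
  shows "\<forall>t\<in>I. x t = 0"
proof (rule ccontr)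
  let ?J = "{t \<in> I. x t \<noteq> 0}"
  assume "\<not> (\<forall>t\<in>I. x t = 0)"
  then have J: "finite ?J" "?J \<noteq> {}" using \<open>finite I\<close> by auto
  have "Max (\<mu> ` ?J) \<in> \<mu> ` ?J" using J by simp
  then obtain s where s: "s \<in> ?J" "\<mu> s = Max (\<mu> ` ?J)" by auto
  have "(\<Sum>t\<in>I. A s t * x t) = (\<Sum>t\<in>I. if t = s then A s s * x s else 0)"
  proof (rule sum.cong)
    fix t assume t: "t \<in> I"
    show "A s t * x t = (if t = s then A s s * x s else 0)"
    proof (cases "t = s \<or> x t = 0")
      case False
      then have "\<mu> t \<le> \<mu> s" using s J t by auto
      then have "A s t = 0" using upper[of s t] s t False by auto
      then show ?thesis using False by simp
    qed (cases "t = s", auto)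
  qed simp
  also have "\<dots> = A s s * x s" using s \<open>finite I\<close> by simp
  finally show False using solution[of s] diag[of s] s by simp
qed

subsection \<open>Permutation invariance\<close>

lemma Sym_opsD:
  assumes "M \<in> Sym_ops N"
  shows "M \<in> qubit_ops N" and "hermitian_op M"
    and "\<pi> permutes {..<N} \<Longrightarrow> op_mult N (op_mult N (perm_op N \<pi>) M) (adjoint_op (perm_op N \<pi>)) = M"
  using assms unfolding Sym_ops_def by blast+

lemma finite_states: "finite (states N)"
proof -
  have "states N = {xs. set xs \<subseteq> UNIV \<and> length xs = N}" by (auto simp: states_def)
  then show ?thesis using finite_lists_length_eq[of "UNIV :: bool set" N] by simp
qed

lemma permute_state_in_states [simp]: "permute_state N \<pi> xs \<in> states N"
  by (simp add: permute_state_def states_def)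

lemma nth_permute_state: "t < N \<Longrightarrow> permute_state N \<pi> xs ! t = xs ! inv \<pi> t"
  by (simp add: permute_state_def)

lemma permute_state_eq_iff:
  assumes \<pi>: "\<pi> permutes {..<N}" and xs: "xs \<in> states N" and zs: "zs \<in> states N"
  shows "xs = permute_state N \<pi> zs \<longleftrightarrow> zs = permute_state N (inv \<pi>) xs"
proof -
  have "bij \<pi>" using \<pi> permutes_bij by blast
  then have inv: "inv (inv \<pi>) = \<pi>" "\<And>t. inv \<pi> (\<pi> t) = t" "\<And>t. \<pi> (inv \<pi> t) = t"
    by (auto simp: inv_inv_eq bij_is_inj inv_f_f bij_is_surj surj_f_inv_f)
  have "\<And>t. t < N \<Longrightarrow> \<pi> t < N" "\<And>t. t < N \<Longrightarrow> inv \<pi> t < N"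
    using permutes_in_image[OF \<pi>] permutes_in_image[OF permutes_inv[OF \<pi>]] by auto
  then show ?thesis
    using xs zs by (auto simp: list_eq_iff_nth_eq states_def nth_permute_state inv permute_state_def)
qed

lemma perm_op_conj_apply:
  assumes \<pi>: "\<pi> permutes {..<N}"
  shows "op_mult N (op_mult N (perm_op N \<pi>) M) (adjoint_op (perm_op N \<pi>)) xs ys
     = (if xs \<in> states N \<and> ys \<in> states N
        then M (permute_state N (inv \<pi>) xs) (permute_state N (inv \<pi>) ys) else 0)"
proof -
  have perm: "perm_op N \<pi> xs zs = (if xs \<in> states N \<and> zs = permute_state N (inv \<pi>) xs then 1 else 0)"
    if "zs \<in> states N" for xs zs
    using permute_state_eq_iff[OF \<pi> _ that] that by (auto simp: perm_op_def)
  have left: "op_mult N (perm_op N \<pi>) M xs zs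
     = (if xs \<in> states N then M (permute_state N (inv \<pi>) xs) zs else 0)" for xs zs
  proof -
    have "op_mult N (perm_op N \<pi>) M xs zs
       = (\<Sum>ws\<in>states N. if ws = permute_state N (inv \<pi>) xs then (if xs \<in> states N then M ws zs else 0) else 0)"
      unfolding op_mult_def by (rule sum.cong) (auto simp: perm)
    then show ?thesis by (simp add: sum.delta' finite_states)
  qed
  have "op_mult N (op_mult N (perm_op N \<pi>) M) (adjoint_op (perm_op N \<pi>)) xs ys
     = (\<Sum>zs\<in>states N. if zs = permute_state N (inv \<pi>) ys then
          (if ys \<in> states N then op_mult N (perm_op N \<pi>) M xs zs else 0) else 0)"
    unfolding op_mult_def[of N "op_mult N (perm_op N \<pi>) M"] adjoint_op_def
    by (rule sum.cong) (auto simp: perm)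
  then show ?thesis by (simp add: sum.delta' finite_states left)
qed

lemma cnj_pauli_comb: "cnj (pauli_comb a b c y x) = pauli_comb a b c x y"
  by (cases x; cases y) (simp_all add: pauli_comb_def idM_def sigX_def sigY_def sigZ_def)

lemma tensor_pow_pauli_comb_in_Sym_ops: "tensor_pow N (pauli_comb a b c) \<in> Sym_ops N"
proof -
  let ?T = "tensor_pow N (pauli_comb a b c)"
  have "?T \<in> qubit_ops N" by (auto simp: qubit_ops_def tensor_pow_def)
  moreover have "hermitian_op ?T"
    by (auto simp: hermitian_op_def adjoint_op_def fun_eq_iff tensor_pow_def cnj_pauli_comb)
  moreover have "op_mult N (op_mult N (perm_op N \<pi>) ?T) (adjoint_op (perm_op N \<pi>)) = ?T"
    if \<pi>: "\<pi> permutes {..<N}" for \<pi>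
  proof (intro ext)
    fix xs ys
    have "(\<Prod>t<N. pauli_comb a b c (xs ! \<pi> t) (ys ! \<pi> t)) = (\<Prod>t<N. pauli_comb a b c (xs ! t) (ys ! t))"
      using prod.reindex_bij_betw[OF permutes_imp_bij[OF \<pi>]] by simp
    moreover have "inv (inv \<pi>) = \<pi>" using \<pi> permutes_bij by (blast intro: inv_inv_eq)
    ultimately show "op_mult N (op_mult N (perm_op N \<pi>) ?T) (adjoint_op (perm_op N \<pi>)) xs ys = ?T xs ys"
      unfolding perm_op_conj_apply[OF \<pi>] by (auto simp: tensor_pow_def nth_permute_state intro!: prod.cong)
  qed
  ultimately show ?thesis by (simp add: Sym_ops_def)
qed

lemma pauli_tensor_in_Sym_ops: "pauli_tensor N a b c t \<in> Sym_ops N"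
  by (auto simp: pauli_tensor_def tensor_pow_pauli_comb_in_Sym_ops split: prod.split)

subsection \<open>Product functionals and linear independence\<close>

lemma sum_states_Suc:
  "(\<Sum>xs\<in>states (Suc N). g xs) = (\<Sum>x\<in>UNIV. \<Sum>xs\<in>states N. g (x # xs))"
  for g :: "bool list \<Rightarrow> 'a::comm_monoid_add"
proof -
  have "states (Suc N) = (\<lambda>(x, xs). x # xs) ` (UNIV \<times> states N)"
    by (auto simp: states_def image_iff length_Suc_conv)
  moreover have "inj_on (\<lambda>(x, xs). x # xs) (UNIV \<times> states N)" by (auto simp: inj_on_def)
  ultimately show ?thesis by (simp add: sum.reindex sum.cartesian_product split_def)
qed

lemma sum_states_prod:
  "(\<Sum>xs\<in>states N. \<Prod>t<N. g t (xs ! t)) = (\<Prod>t<N. \<Sum>x\<in>UNIV. g t x)"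
  for g :: "nat \<Rightarrow> bool \<Rightarrow> 'a::comm_semiring_1"
proof (induction N arbitrary: g)
  case 0
  have "states 0 = {[]}" by (auto simp: states_def)
  then show ?case by simp
next
  case (Suc N)
  have "(\<Sum>xs\<in>states (Suc N). \<Prod>t<Suc N. g t (xs ! t))
     = (\<Sum>x\<in>UNIV. \<Sum>xs\<in>states N. g 0 x * (\<Prod>t<N. g (Suc t) (xs ! t)))"
    unfolding sum_states_Suc by (simp only: prod.lessThan_Suc_shift nth_Cons_0 nth_Cons_Suc)
  also have "\<dots> = (\<Sum>x\<in>UNIV. g 0 x * (\<Prod>t<N. \<Sum>y\<in>UNIV. g (Suc t) y))"
    using Suc.IH[of "\<lambda>t. g (Suc t)"] by (simp add: sum_distrib_left[symmetric])
  also have "\<dots> = (\<Prod>t<Suc N. \<Sum>x\<in>UNIV. g t x)"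
    by (simp only: prod.lessThan_Suc_shift sum_distrib_right)
  finally show ?case .
qed

definition pairing :: "qmat2 \<Rightarrow> qmat2 \<Rightarrow> complex" where
  "pairing w A = (\<Sum>x\<in>UNIV. \<Sum>y\<in>UNIV. w x y * A x y)"

definition tensor_functional :: "nat \<Rightarrow> (nat \<Rightarrow> qmat2) \<Rightarrow> qop \<Rightarrow> complex" where
  "tensor_functional N w M = (\<Sum>xs\<in>states N. \<Sum>ys\<in>states N. (\<Prod>t<N. w t (xs ! t) (ys ! t)) * M xs ys)"

lemma tensor_functional_tensor_pow:
  "tensor_functional N w (tensor_pow N A) = (\<Prod>t<N. pairing (w t) A)"
proof -
  have "tensor_functional N w (tensor_pow N A)
      = (\<Sum>xs\<in>states N. \<Sum>ys\<in>states N. \<Prod>t<N. w t (xs ! t) (ys ! t) * A (xs ! t) (ys ! t))"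
    unfolding tensor_functional_def by (intro sum.cong refl) (simp add: tensor_pow_def prod.distrib)
  also have "\<dots> = (\<Sum>xs\<in>states N. \<Prod>t<N. \<Sum>y\<in>UNIV. w t (xs ! t) y * A (xs ! t) y)"
    by (intro sum.cong refl) (rule sum_states_prod)
  also have "\<dots> = (\<Prod>t<N. pairing (w t) A)"
    unfolding pairing_def by (rule sum_states_prod)
  finally show ?thesis .
qed

lemma tensor_functional_real_comb:
  "tensor_functional N w (real_comb I r F) = (\<Sum>t\<in>I. of_real (r t) * tensor_functional N w (F t))"
  unfolding tensor_functional_def real_comb_def
  by (simp add: sum_distrib_left sum_distrib_right sum.swap[of _ I] mult_ac)

definition dual_I :: "real \<Rightarrow> qmat2" where
  "dual_I \<alpha> x y = (if x = y then (if x then of_real ((1 + \<alpha>) / 2) else of_real ((1 - \<alpha>) / 2)) else 0)"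

definition dual_X :: "real \<Rightarrow> qmat2" where
  "dual_X \<beta> x y = (if x = y then (if x then of_real (\<beta> / 2) else of_real (- \<beta> / 2)) else 1 / 2)"

definition dual_Y :: "real \<Rightarrow> qmat2" where
  "dual_Y \<gamma> x y = (if x = y then (if x then of_real (\<gamma> / 2) else of_real (- \<gamma> / 2))
     else (if x then - \<i> / 2 else \<i> / 2))"

definition dual_Z :: qmat2 where
  "dual_Z x y = (if x = y then (if x then - 1 / 2 else 1 / 2) else 0)"

lemma pairing_dual_I: "pairing (dual_I \<alpha>) (pauli_comb a b c) = of_real (a - \<alpha>)"
  and pairing_dual_X: "pairing (dual_X \<beta>) (pauli_comb a b c) = of_real (b - \<beta>)"
  and pairing_dual_Y: "pairing (dual_Y \<gamma>) (pauli_comb a b c) = of_real (c - \<gamma>)"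
  and pairing_dual_Z: "pairing dual_Z (pauli_comb a b c) = 1"
  by (simp_all add: pairing_def UNIV_bool dual_I_def dual_X_def dual_Y_def dual_Z_def
      pauli_comb_def idM_def sigX_def sigY_def sigZ_def field_simps complex_eq_iff)

definition dual_weights ::
    "(nat \<Rightarrow> real) \<Rightarrow> (nat \<Rightarrow> real) \<Rightarrow> (nat \<Rightarrow> real) \<Rightarrow> nat \<times> nat \<times> nat \<Rightarrow> nat \<Rightarrow> qmat2" where
  "dual_weights a b c = (\<lambda>(i0, j0, k0) t.
     if t < i0 then dual_I (a t)
     else if t < i0 + j0 then dual_X (b (t - i0))
     else if t < i0 + j0 + k0 then dual_Y (c (t - i0 - j0))
     else dual_Z)"

lemma prod_lessThan_add:
  "(\<Prod>t<m + n. g t) = (\<Prod>t<m. g t) * (\<Prod>t<n. g (m + t))"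
  for g :: "nat \<Rightarrow> 'a::comm_monoid_mult"
  by (induction n) (simp_all add: mult.assoc)

lemma prod_lessThan_blocks:
  fixes f g h :: "nat \<Rightarrow> 'a::comm_monoid_mult"
  assumes "i0 + j0 + k0 \<le> N"
  shows "(\<Prod>t<N. if t < i0 then f t else if t < i0 + j0 then g (t - i0)
            else if t < i0 + j0 + k0 then h (t - i0 - j0) else 1)
       = (\<Prod>t<i0. f t) * (\<Prod>t<j0. g t) * (\<Prod>t<k0. h t)"
proof -
  obtain l where N: "N = i0 + j0 + k0 + l" using assms le_Suc_ex by blast
  have "?thesis \<longleftrightarrow> (\<Prod>t<i0. f t) * (\<Prod>t<j0. g t) * (\<Prod>t<k0. h t) * 1
      = (\<Prod>t<i0. f t) * (\<Prod>t<j0. g t) * (\<Prod>t<k0. h t)"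
    unfolding N prod_lessThan_add add.assoc[symmetric]
    by (intro arg_cong2[where f = "(=)"] arg_cong2[where f = "(*)"] prod.cong refl) auto
  then show ?thesis by simp
qed

lemma tensor_functional_dual_weights:
  assumes "i0 + j0 + k0 \<le> N"
  shows "tensor_functional N (dual_weights a b c (i0, j0, k0)) (pauli_tensor N a b c (i, j, k))
    = of_real ((\<Prod>t<i0. a i - a t) * (\<Prod>t<j0. b j - b t) * (\<Prod>t<k0. c k - c t))"
proof -
  have "tensor_functional N (dual_weights a b c (i0, j0, k0)) (pauli_tensor N a b c (i, j, k))
      = (\<Prod>t<N. of_real (if t < i0 then a i - a t else if t < i0 + j0 then b j - b (t - i0)
          else if t < i0 + j0 + k0 then c k - c (t - i0 - j0) else 1))"
    unfolding pauli_tensor_def case_prod_conv tensor_functional_tensor_pow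
    by (intro prod.cong refl)
      (simp add: dual_weights_def pairing_dual_I pairing_dual_X pairing_dual_Y pairing_dual_Z)
  also have "\<dots> = of_real ((\<Prod>t<i0. a i - a t) * (\<Prod>t<j0. b j - b t) * (\<Prod>t<k0. c k - c t))"
    unfolding of_real_prod[symmetric]
    using prod_lessThan_blocks[OF assms, of "\<lambda>t. a i - a t" "\<lambda>t. b j - b t" "\<lambda>t. c k - c t"]
    by simp
  finally show ?thesis .
qed

lemma tensor_functional_dual_weights_eq_0:
  assumes "i0 + j0 + k0 \<le> N" and "\<not> (i0 \<le> i \<and> j0 \<le> j \<and> k0 \<le> k)"
  shows "tensor_functional N (dual_weights a b c (i0, j0, k0)) (pauli_tensor N a b c (i, j, k)) = 0"
proof -
  have "(\<Prod>t<i0. a i - a t) = 0 \<or> (\<Prod>t<j0. b j - b t) = 0 \<or> (\<Prod>t<k0. c k - c t) = 0"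
    using assms(2) by (auto simp: prod_zero_iff)
  then show ?thesis unfolding tensor_functional_dual_weights[OF assms(1)] by auto
qed

lemma tensor_functional_dual_weights_diag_neq_0:
  assumes "inj_on a {..N}" "inj_on b {..N}" "inj_on c {..N}" and "i0 + j0 + k0 \<le> N"
  shows "tensor_functional N (dual_weights a b c (i0, j0, k0)) (pauli_tensor N a b c (i0, j0, k0)) \<noteq> 0"
proof -
  have "(\<Prod>t<i0. a i0 - a t) \<noteq> 0" "(\<Prod>t<j0. b j0 - b t) \<noteq> 0" "(\<Prod>t<k0. c k0 - c t) \<noteq> 0"
    using assms by (auto simp: prod_zero_iff dest: inj_onD)
  then show ?thesis unfolding tensor_functional_dual_weights[OF assms(4)] by simp
qed

lemma pauli_tensor_coeffs_eq_0:
  assumes "inj_on a {..N}" "inj_on b {..N}" "inj_on c {..N}"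
    and comb: "real_comb (triples_le N) r (pauli_tensor N a b c) = (\<lambda>_ _. 0)"
  shows "\<forall>t\<in>triples_le N. r t = 0"
proof -
  let ?A = "\<lambda>s t. tensor_functional N (dual_weights a b c s) (pauli_tensor N a b c t)"
  have "\<forall>t\<in>triples_le N. complex_of_real (r t) = 0"
  proof (rule triangular_solution_eq_0[where \<mu> = "\<lambda>(i, j, k). i + j + k" and A = ?A])
    show "finite (triples_le N)" by (rule finite_triples_le)
  next
    fix s t assume s: "s \<in> triples_le N" and "?A s t \<noteq> 0"
    obtain i0 j0 k0 i j k where st: "s = (i0, j0, k0)" "t = (i, j, k)" by (cases s; cases t)
    have "i0 + j0 + k0 \<le> N" using s st by (simp add: triples_le_def)
    then have "i0 \<le> i \<and> j0 \<le> j \<and> k0 \<le> k"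
      using tensor_functional_dual_weights_eq_0 \<open>?A s t \<noteq> 0\<close> st by blast
    then show "s = t \<or> (\<lambda>(i, j, k). i + j + k) s < (\<lambda>(i, j, k). i + j + k) t"
      using st by auto
  next
    fix s assume "s \<in> triples_le N"
    then show "?A s s \<noteq> 0"
      using tensor_functional_dual_weights_diag_neq_0[OF assms(1-3)]
      by (cases s) (simp add: triples_le_def)
  next
    fix s
    have "(\<Sum>t\<in>triples_le N. ?A s t * of_real (r t)) = tensor_functional N (dual_weights a b c s) (\<lambda>_ _. 0)"
      unfolding comb[symmetric] tensor_functional_real_comb by (simp add: mult.commute)
    then show "(\<Sum>t\<in>triples_le N. ?A s t * of_real (r t)) = 0"
      by (simp add: tensor_functional_def)
  qed
  then show ?thesis by simp
qed

subsection \<open>A spanning family of the symmetric operators\<close>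

definition pair_counts :: "bool list \<Rightarrow> bool list \<Rightarrow> nat \<times> nat \<times> nat" where
  "pair_counts xs ys = (count (mset (zip xs ys)) (False, False), count (mset (zip xs ys)) (False, True),
     count (mset (zip xs ys)) (True, False))"

lemma length_eq_sum_count_bool_pairs: "length l = count (mset l) (False, False) + count (mset l) (False, True)
   + count (mset l) (True, False) + count (mset l) (True, True)"
  for l :: "(bool \<times> bool) list"
  by (induction l) auto

lemma pair_counts_in_triples_le:
  "xs \<in> states N \<Longrightarrow> ys \<in> states N \<Longrightarrow> pair_counts xs ys \<in> triples_le N"
  using length_eq_sum_count_bool_pairs[of "zip xs ys"] by (auto simp: pair_counts_def states_def triples_le_def)

lemma count_mset_zip_swap: "count (mset (zip ys xs)) (x, y) = count (mset (zip xs ys)) (y, x)"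
proof (induction xs arbitrary: ys)
  case (Cons a xs) then show ?case by (cases ys) auto
qed simp

lemma pair_counts_swap: "pair_counts xs ys = (p, q, u) \<Longrightarrow> pair_counts ys xs = (p, u, q)"
  using count_mset_zip_swap[of ys xs False False] count_mset_zip_swap[of ys xs False True]
    count_mset_zip_swap[of ys xs True False]
  by (simp add: pair_counts_def)

lemma Sym_ops_eq_if_pair_counts_eq:
  assumes M: "M \<in> Sym_ops N"
    and states: "xs \<in> states N" "ys \<in> states N" "xs' \<in> states N" "ys' \<in> states N"
    and counts: "pair_counts xs ys = pair_counts xs' ys'"
  shows "M xs ys = M xs' ys'"
proof -
  have len: "length xs = N" "length ys = N" "length xs' = N" "length ys' = N"
    using states by (auto simp: states_def)
  have "count (mset (zip xs ys)) z = count (mset (zip xs' ys')) z" for z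
  proof -
    obtain x y where z: "z = (x, y)" by (cases z)
    have "count (mset (zip xs ys)) (True, True) = count (mset (zip xs' ys')) (True, True)"
      using length_eq_sum_count_bool_pairs[of "zip xs ys"] length_eq_sum_count_bool_pairs[of "zip xs' ys'"]
        counts len
      by (simp add: pair_counts_def)
    then show ?thesis using counts unfolding z by (cases x; cases y) (simp_all add: pair_counts_def)
  qed
  then have "mset (zip xs' ys') = mset (zip xs ys)" by (simp add: multiset_eq_iff)
  then obtain p where p: "p permutes {..<length (zip xs ys)}" "permute_list p (zip xs ys) = zip xs' ys'"
    by (rule mset_eq_permutation)
  have pN: "p permutes {..<N}" using p(1) len by simp
  have "zip (permute_list p xs) (permute_list p ys) = zip xs' ys'"
    using p(2) permute_list_zip[OF pN, of xs ys] len by simp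
  then have lists: "permute_list p xs = xs'" "permute_list p ys = ys'"
    using len by (auto simp: zip_eq_conv)
  have "inv (inv p) = p" using pN permutes_bij by (blast intro: inv_inv_eq)
  then have "permute_state N (inv p) zs = permute_list p zs" if "length zs = N" for zs
    using that by (simp add: permute_state_def permute_list_def)
  with lists len have perm: "permute_state N (inv p) xs = xs'" "permute_state N (inv p) ys = ys'"
    by simp_all
  have "M xs ys = op_mult N (op_mult N (perm_op N p) M) (adjoint_op (perm_op N p)) xs ys"
    using Sym_opsD(3)[OF M pN] by simp
  also have "\<dots> = M xs' ys'" unfolding perm_op_conj_apply[OF pN] using states perm by simp
  finally show ?thesis .
qed

definition count_class :: "nat \<Rightarrow> nat \<times> nat \<times> nat \<Rightarrow> qop" where
  "count_class N n xs ys = (if xs \<in> states N \<and> ys \<in> states N \<and> pair_counts xs ys = n then 1 else 0)"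

text \<open>Hermiticity ties the entries in class \<open>(p, q, u)\<close> to those in the transposed class
  \<open>(p, u, q)\<close>: each pair of classes carries one real and one imaginary direction, a self-transposed
  class only a real one.\<close>
definition sym_basis :: "nat \<Rightarrow> nat \<times> nat \<times> nat \<Rightarrow> qop" where
  "sym_basis N = (\<lambda>(p, q, u).
     if q = u then count_class N (p, q, u)
     else if u < q then (\<lambda>xs ys. count_class N (p, q, u) xs ys + count_class N (p, u, q) xs ys)
     else (\<lambda>xs ys. \<i> * (count_class N (p, q, u) xs ys - count_class N (p, u, q) xs ys)))"

definition class_value :: "nat \<Rightarrow> qop \<Rightarrow> nat \<times> nat \<times> nat \<Rightarrow> complex" where
  "class_value N M n = (SOME z. \<forall>xs ys. xs \<in> states N \<and> ys \<in> states N \<and> pair_counts xs ys = n \<longrightarrow> M xs ys = z)"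

definition sym_coord :: "nat \<Rightarrow> qop \<Rightarrow> nat \<times> nat \<times> nat \<Rightarrow> real" where
  "sym_coord N M = (\<lambda>(p, q, u). if u \<le> q then Re (class_value N M (p, q, u)) else Im (class_value N M (p, q, u)))"

lemma class_value_pair_counts:
  assumes M: "M \<in> Sym_ops N" and states: "xs \<in> states N" "ys \<in> states N"
  shows "class_value N M (pair_counts xs ys) = M xs ys"
proof -
  let ?P = "\<lambda>z. \<forall>xs' ys'. xs' \<in> states N \<and> ys' \<in> states N \<and> pair_counts xs' ys' = pair_counts xs ys
    \<longrightarrow> M xs' ys' = z"
  have "?P (M xs ys)"
  proof (intro allI impI)
    fix xs' ys' assume "xs' \<in> states N \<and> ys' \<in> states N \<and> pair_counts xs' ys' = pair_counts xs ys"
    then show "M xs' ys' = M xs ys"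
      using Sym_ops_eq_if_pair_counts_eq[OF M _ _ states, of xs' ys'] by simp
  qed
  then have "?P (class_value N M (pair_counts xs ys))" unfolding class_value_def by (rule someI)
  then show ?thesis using states by simp
qed

lemma Sym_ops_apply_eq_real_comb_sym_basis:
  assumes M: "M \<in> Sym_ops N" and states: "xs \<in> states N" "ys \<in> states N"
  shows "M xs ys = real_comb (triples_le N) (sym_coord N M) (sym_basis N) xs ys"
proof -
  obtain p q u where m: "pair_counts xs ys = (p, q, u)" by (cases "pair_counts xs ys")
  have val: "class_value N M (p, q, u) = M xs ys"
    using class_value_pair_counts[OF M states] m by simp
  have "adjoint_op M ys xs = M ys xs"
    using Sym_opsD(2)[OF M] by (simp add: hermitian_op_def)
  then have "M ys xs = cnj (M xs ys)"
    by (simp add: adjoint_op_def)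
  then have val': "class_value N M (p, u, q) = cnj (M xs ys)"
    using class_value_pair_counts[OF M states(2,1)] pair_counts_swap[OF m] by simp
  have cls: "count_class N n xs ys = (if n = (p, q, u) then 1 else 0)" for n
    using states m by (simp add: count_class_def)
  have mem: "(p, q, u) \<in> triples_le N" "(p, u, q) \<in> triples_le N"
    using pair_counts_in_triples_le[OF states] m by (auto simp: triples_le_def)
  let ?f = "\<lambda>n. complex_of_real (sym_coord N M n) * sym_basis N n xs ys"
  have "sym_basis N n xs ys = 0" if "n \<notin> {(p, q, u), (p, u, q)}" for n
    using that by (cases n) (auto simp: sym_basis_def cls)
  then have "real_comb (triples_le N) (sym_coord N M) (sym_basis N) xs ys = sum ?f {(p, q, u), (p, u, q)}"
    unfolding real_comb_def
    by (intro sum.mono_neutral_right[OF finite_triples_le]) (use mem in auto)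
  also have "\<dots> = M xs ys"
  proof (cases "q = u")
    case True
    then have "Im (M xs ys) = 0" using val val' by (simp add: complex_eq_iff)
    then show ?thesis
      using True val by (simp add: sym_coord_def sym_basis_def cls complex_eq_iff)
  next
    case False
    then have "sum ?f {(p, q, u), (p, u, q)} = ?f (p, q, u) + ?f (p, u, q)" by simp
    also have "\<dots> = M xs ys"
      using False val val' by (auto simp: sym_coord_def sym_basis_def cls complex_eq_iff)
    finally show ?thesis .
  qed
  finally show ?thesis ..
qed

lemma Sym_ops_eq_real_comb_sym_basis:
  assumes M: "M \<in> Sym_ops N"
  shows "M = real_comb (triples_le N) (sym_coord N M) (sym_basis N)"
proof (intro ext)
  fix xs ys
  show "M xs ys = real_comb (triples_le N) (sym_coord N M) (sym_basis N) xs ys"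
  proof (cases "xs \<in> states N \<and> ys \<in> states N")
    case False
    then have "count_class N n xs ys = 0" for n
      by (auto simp: count_class_def)
    then have "sym_basis N n xs ys = 0" for n
      by (simp add: sym_basis_def split: prod.split)
    moreover have "M xs ys = 0"
      using Sym_opsD(1)[OF M] False by (simp add: qubit_ops_def)
    ultimately show ?thesis by (simp add: real_comb_def)
  qed (use Sym_ops_apply_eq_real_comb_sym_basis[OF M] in blast)
qed

lemma Sym_ops_subset_span_sym_basis: "Sym_ops N \<subseteq> qop.span (sym_basis N ` triples_le N)"
proof
  fix M assume "M \<in> Sym_ops N"
  then have "M = (\<Sum>n\<in>triples_le N. rscale (sym_coord N M n) (sym_basis N n))"
    unfolding real_comb_eq_sum[symmetric] by (rule Sym_ops_eq_real_comb_sym_basis)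
  also have "\<dots> \<in> qop.span (sym_basis N ` triples_le N)"
    by (intro qop.span_sum qop.span_scale qop.span_base) auto
  finally show "M \<in> qop.span (sym_basis N ` triples_le N)" .
qed

lemma Sym_ops_eq_real_comb_pauli_tensor:
  assumes "inj_on a {..N}" "inj_on b {..N}" "inj_on c {..N}" and M: "M \<in> Sym_ops N"
  shows "\<exists>r. M = real_comb (triples_le N) r (pauli_tensor N a b c)"
proof -
  have "\<exists>r. M = (\<Sum>t\<in>triples_le N. rscale (r t) (pauli_tensor N a b c t))"
  proof (rule qop.exists_coeffs_if_coeffs_zero_card_le)
    show "finite (triples_le N)" "finite (sym_basis N ` triples_le N)"
      by (simp_all add: finite_triples_le)
    show "\<forall>t\<in>triples_le N. r t = 0" if "(\<Sum>t\<in>triples_le N. rscale (r t) (pauli_tensor N a b c t)) = 0" for r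
      using pauli_tensor_coeffs_eq_0[OF assms(1-3)] that by (simp add: real_comb_eq_sum zero_fun_def)
    show "pauli_tensor N a b c ` triples_le N \<subseteq> qop.span (sym_basis N ` triples_le N)"
      using Sym_ops_subset_span_sym_basis pauli_tensor_in_Sym_ops by blast
    show "card (sym_basis N ` triples_le N) \<le> card (triples_le N)"
      by (rule card_image_le) (simp add: finite_triples_le)
    show "M \<in> qop.span (sym_basis N ` triples_le N)"
      using M Sym_ops_subset_span_sym_basis by blast
  qed
  then show ?thesis by (simp add: real_comb_eq_sum)
qed

theorem mainTheorem3:
  fixes N :: nat and a b c :: "nat \<Rightarrow> real"
  assumes "N \<ge> 1"
    and "inj_on a {..N}" and "inj_on b {..N}" and "inj_on c {..N}"
  defines "Idx \<equiv> {(i, j, k). i + j + k \<le> N}"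
    and "F \<equiv> (\<lambda>(i, j, k). tensor_pow N (pauli_comb (a i) (b j) (c k)))"
  shows "card Idx = (N + 3) choose 3
    \<and> (\<forall>t\<in>Idx. F t \<in> Sym_ops N)
    \<and> (\<forall>r. real_comb Idx r F = (\<lambda>_ _. 0) \<longrightarrow> (\<forall>t\<in>Idx. r t = 0))
    \<and> (\<forall>M\<in>Sym_ops N. \<exists>r. M = real_comb Idx r F)"
proof -
  have Idx: "Idx = triples_le N" and F: "F = pauli_tensor N a b c"
    unfolding Idx_def F_def triples_le_def pauli_tensor_def by simp_all
  show ?thesis
    unfolding Idx F
    using card_triples_le pauli_tensor_in_Sym_ops pauli_tensor_coeffs_eq_0[OF assms(2-4)]
      Sym_ops_eq_real_comb_pauli_tensor[OF assms(2-4)]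
    by blast
qed

end
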